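(* Let $p$ be a prime number and let $1\to\Gamma'\to\Gamma\to\Gamma''$ be an exact sequence of groups. Suppose that $\Gamma''$ has bounded finite subgroups, and that $\Gamma'$ is Jordan (respectively $p$-Jordan, generalized $p$-Jordan, nilpotently Jordan of class at most $c$, nilpotently $p$-Jordan of class at most $c$, generalized nilpotently $p$-Jordan of class at most $c$). Then $\Gamma$ is Jordan (respectively $p$-Jordan, generalized $p$-Jordan, nilpotently Jordan of class at most $c$, nilpotently $p$-Jordan of class at most $c$, generalized nilpotently $p$-Jordan of class at most $c$).
   Context: A group has bounded finite subgroups if there is a constant $B$ such that every finite subgroup has order at most $B$. A group $\Gamma$ is Jordan (resp. nilpotently Jordan of class at most $c$) if there is $J(\Gamma)$ such that every finite subgroup contains a normal subgroup of index at most $J(\Gamma)$ which is abelian (resp. nilpotent of class at most $c$). It is generalized $p$-Jordan (resp. generalized nilpotently $p$-Jordan of class at most $c$) if there is $J(\Gamma)$ such that every finite subgroup of order not divisible by $p$ contains a normal subgroup of index at most $J(\Gamma)$ which is abelian (resp. nilpotent of class at most $c$). It is $p$-Jordan (resp. nilpotently $p$-Jordan of class at most $c$) if there are $J(\Gamma)$, $e(\Gamma)$ such that every finite subgroup $G$ contains a normal subgroup of order coprime to $p$ and index at most $J(\Gamma)|G_p|^{e(\Gamma)}$ which is abelian (resp. nilpotent of class at most $c$), $G_p$ being a $p$-Sylow subgroup of $G$. *)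

theory Defs
  imports "HOL-Algebra.Algebra" "HOL-Computational_Algebra.Primes"
begin

definition finite_subgroup :: "('a, 'b) monoid_scheme \<Rightarrow> 'a set \<Rightarrow> bool" where
  "finite_subgroup \<Gamma> G \<longleftrightarrow> subgroup G \<Gamma> \<and> finite G"

definition bounded_finite_subgroups :: "('a, 'b) monoid_scheme \<Rightarrow> bool" where
  "bounded_finite_subgroups \<Gamma> \<longleftrightarrow>
     (\<exists>B::nat. \<forall>G. finite_subgroup \<Gamma> G \<longrightarrow> card G \<le> B)"

definition abelian_set :: "('a, 'b) monoid_scheme \<Rightarrow> 'a set \<Rightarrow> bool" where
  "abelian_set \<Gamma> A \<longleftrightarrow> (\<forall>x\<in>A. \<forall>y\<in>A. x \<otimes>\<^bsub>\<Gamma>\<^esub> y = y \<otimes>\<^bsub>\<Gamma>\<^esub> x)"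

text \<open>Lower central series of the subgroup A: lcs 0 = A = gamma_1, lcs (k+1) = [lcs k, A].\<close>
fun lower_central :: "('a, 'b) monoid_scheme \<Rightarrow> 'a set \<Rightarrow> nat \<Rightarrow> 'a set" where
  "lower_central \<Gamma> A 0 = A"
| "lower_central \<Gamma> A (Suc k) = generate \<Gamma>
     {x \<otimes>\<^bsub>\<Gamma>\<^esub> y \<otimes>\<^bsub>\<Gamma>\<^esub> inv\<^bsub>\<Gamma>\<^esub> x \<otimes>\<^bsub>\<Gamma>\<^esub> inv\<^bsub>\<Gamma>\<^esub> y | x y. x \<in> lower_central \<Gamma> A k \<and> y \<in> A}"

definition nilpotent_class_le :: "('a, 'b) monoid_scheme \<Rightarrow> nat \<Rightarrow> 'a set \<Rightarrow> bool" where
  "nilpotent_class_le \<Gamma> c A \<longleftrightarrow> lower_central \<Gamma> A c = {\<one>\<^bsub>\<Gamma>\<^esub>}"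

definition jordan_wrt :: "('a, 'b) monoid_scheme \<Rightarrow> ('a set \<Rightarrow> bool) \<Rightarrow> bool" where
  "jordan_wrt \<Gamma> P \<longleftrightarrow> (\<exists>J::nat. \<forall>G. finite_subgroup \<Gamma> G \<longrightarrow>
     (\<exists>A. A \<lhd> (\<Gamma>\<lparr>carrier := G\<rparr>) \<and> card G \<le> J * card A \<and> P A))"

definition gen_p_jordan_wrt :: "('a, 'b) monoid_scheme \<Rightarrow> nat \<Rightarrow> ('a set \<Rightarrow> bool) \<Rightarrow> bool" where
  "gen_p_jordan_wrt \<Gamma> p P \<longleftrightarrow> (\<exists>J::nat. \<forall>G. finite_subgroup \<Gamma> G \<and> \<not> p dvd card G \<longrightarrow>
     (\<exists>A. A \<lhd> (\<Gamma>\<lparr>carrier := G\<rparr>) \<and> card G \<le> J * card A \<and> P A))"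

text \<open>The order of a p-Sylow subgroup of G is p ^ multiplicity p (card G).\<close>
definition p_jordan_wrt :: "('a, 'b) monoid_scheme \<Rightarrow> nat \<Rightarrow> ('a set \<Rightarrow> bool) \<Rightarrow> bool" where
  "p_jordan_wrt \<Gamma> p P \<longleftrightarrow> (\<exists>J e::nat. \<forall>G. finite_subgroup \<Gamma> G \<longrightarrow>
     (\<exists>A. A \<lhd> (\<Gamma>\<lparr>carrier := G\<rparr>) \<and> coprime (card A) p \<and>
          card G \<le> J * (p ^ multiplicity p (card G)) ^ e * card A \<and> P A))"

definition Jordan where "Jordan \<Gamma> = jordan_wrt \<Gamma> (abelian_set \<Gamma>)"
definition p_Jordan where "p_Jordan \<Gamma> p = p_jordan_wrt \<Gamma> p (abelian_set \<Gamma>)"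
definition gen_p_Jordan where "gen_p_Jordan \<Gamma> p = gen_p_jordan_wrt \<Gamma> p (abelian_set \<Gamma>)"
definition nil_Jordan where "nil_Jordan \<Gamma> c = jordan_wrt \<Gamma> (nilpotent_class_le \<Gamma> c)"
definition nil_p_Jordan where "nil_p_Jordan \<Gamma> p c = p_jordan_wrt \<Gamma> p (nilpotent_class_le \<Gamma> c)"
definition gen_nil_p_Jordan where "gen_nil_p_Jordan \<Gamma> p c = gen_p_jordan_wrt \<Gamma> p (nilpotent_class_le \<Gamma> c)"

end

theory Submission
  imports Defs
begin

(*
  Let H be a finite subgroup of G and K = H \<inter> ker f. Since H/K embeds in G2, the index of K in H is
  at most B, and K is the isomorphic image of the finite subgroup i^-1(H) of G1, whose order divides
  |H|. The hypothesis on G1 gives a normal subgroup A of K of index at most N with the required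
  property. A need not be normal in H, but its conjugates under H only depend on the coset modulo K,
  as K normalises A; so there are at most B of them, and their intersection, the normal core of A in H,
  has index at most N^B in K, hence at most B N^B in H. Being abelian, or nilpotent of class at most c,
  passes to subgroups, and the order of the core divides |A|, which keeps it coprime to p. In the
  p-Jordan case N = J |K_p|^e \<le> J |H_p|^e, so B N^B is again of the form J' |H_p|^e'.
*)

lemma card_le_card_image_mult:
  assumes "finite A" and "\<And>z. z \<in> g ` A \<Longrightarrow> card {a \<in> A. g a = z} \<le> m"
  shows "card A \<le> card (g ` A) * m"
proof -
  have "A = (\<Union>z\<in>g ` A. {a \<in> A. g a = z})" by auto
  then have "card A \<le> (\<Sum>z\<in>g ` A. card {a \<in> A. g a = z})"
    by (metis card_UN_le assms(1) finite_imageI)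
  also have "\<dots> \<le> (\<Sum>z\<in>g ` A. m)" by (intro sum_mono assms(2))
  finally show ?thesis by simp
qed

lemma card_image_le_card_image:
  assumes "finite A" and "\<And>x y. x \<in> A \<Longrightarrow> y \<in> A \<Longrightarrow> q x = q y \<Longrightarrow> g x = g y"
  shows "card (g ` A) \<le> card (q ` A)"
proof -
  have "g ` A \<subseteq> (\<lambda>y. g (inv_into A q y)) ` (q ` A)"
  proof
    fix z assume "z \<in> g ` A"
    then obtain x where x: "x \<in> A" "z = g x" by blast
    have "inv_into A q (q x) \<in> A" "q (inv_into A q (q x)) = q x"
      using x(1) by (auto intro: inv_into_into f_inv_into_f)
    then have "z = g (inv_into A q (q x))" using assms(2) x by metis
    then show "z \<in> (\<lambda>y. g (inv_into A q y)) ` (q ` A)" using x(1) by blast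
  qed
  then have "card (g ` A) \<le> card ((\<lambda>y. g (inv_into A q y)) ` (q ` A))"
    using assms(1) by (intro card_mono) auto
  also have "\<dots> \<le> card (q ` A)" using assms(1) by (intro card_image_le) auto
  finally show ?thesis .
qed

definition normal_core :: "('a, 'b) monoid_scheme \<Rightarrow> 'a set \<Rightarrow> 'a set \<Rightarrow> 'a set" where
  "normal_core G H A = (\<Inter>h\<in>H. h <#\<^bsub>G\<^esub> A #>\<^bsub>G\<^esub> inv\<^bsub>G\<^esub> h)"

lemma one_mem_lower_central:
  assumes "subgroup C G"
  shows "\<one>\<^bsub>G\<^esub> \<in> lower_central G C k"
  using subgroup.one_closed[OF assms] by (cases k) (auto intro: generate.one)

lemma abelian_set_hom_image:
  assumes "h \<in> hom G H" "A \<subseteq> carrier G" "abelian_set G A"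
  shows "abelian_set H (h ` A)"
  unfolding abelian_set_def
proof clarify
  fix a b assume "a \<in> A" "b \<in> A"
  moreover have "a \<otimes>\<^bsub>G\<^esub> b = b \<otimes>\<^bsub>G\<^esub> a" using assms(3) calculation unfolding abelian_set_def by blast
  ultimately show "h a \<otimes>\<^bsub>H\<^esub> h b = h b \<otimes>\<^bsub>H\<^esub> h a" using assms(1,2) by (metis hom_mult subsetD)
qed

context group
begin

lemma mult_inv_cancel [simp]: "x \<in> carrier G \<Longrightarrow> y \<in> carrier G \<Longrightarrow> x \<otimes> (inv x \<otimes> y) = y"
  by (simp add: m_assoc[symmetric])

lemma inv_mult_cancel [simp]: "x \<in> carrier G \<Longrightarrow> y \<in> carrier G \<Longrightarrow> inv x \<otimes> (x \<otimes> y) = y"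
  by (simp add: m_assoc[symmetric])

lemma card_subgroup_dvd:
  assumes "subgroup H G" "subgroup K G" "K \<subseteq> H"
  shows "card K dvd card H"
proof -
  interpret H: group "G\<lparr>carrier := H\<rparr>" by (rule subgroup_imp_group[OF assms(1)])
  have "card (rcosets\<^bsub>G\<lparr>carrier := H\<rparr>\<^esub> K) * card K = card H"
    using H.lagrange[OF subgroup_incl[OF assms(2,1,3)]] by (simp add: order_def)
  then show ?thesis by (metis dvd_triv_right)
qed

lemma card_mult_card_le_card_set_mult_Int:
  assumes U: "subgroup U G" "finite U" and V: "subgroup V G" "finite V"
  shows "card U * card V \<le> card (U <#> V) * card (U \<inter> V)"
proof -
  let ?m = "\<lambda>(x, y). x \<otimes> y"
  have carr: "U \<subseteq> carrier G" "V \<subseteq> carrier G" using U V subgroup.subset by blast+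
  have image: "?m ` (U \<times> V) = U <#> V" unfolding set_mult_def by auto
  have "card (U \<times> V) \<le> card (?m ` (U \<times> V)) * card (U \<inter> V)"
  proof (rule card_le_card_image_mult)
    fix z assume "z \<in> ?m ` (U \<times> V)"
    then obtain x0 y0 where x0: "x0 \<in> U" and y0: "y0 \<in> V" and z: "z = x0 \<otimes> y0" by auto
    \<comment> \<open>A factorisation z = x y is determined by x0^-1 x = y0 y^-1, which lies in U \<inter> V.\<close>
    show "card {a \<in> U \<times> V. ?m a = z} \<le> card (U \<inter> V)"
    proof (rule card_inj_on_le[where f = "\<lambda>(x, y). inv x0 \<otimes> x"])
      show "inj_on (\<lambda>(x, y). inv x0 \<otimes> x) {a \<in> U \<times> V. ?m a = z}"
      proof (rule inj_onI, clarsimp)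
        fix x y x' y' assume "x \<in> U" "y \<in> V" "x' \<in> U" "y' \<in> V"
          and "inv x0 \<otimes> x = inv x0 \<otimes> x'" "x' \<otimes> y' = x \<otimes> y"
        then show "x = x' \<and> y = y'" using carr x0 by (auto simp: subset_iff)
      qed
      have "inv x0 \<otimes> x \<in> U \<inter> V" if x: "x \<in> U" and y: "y \<in> V" and xy: "x \<otimes> y = z" for x y
      proof -
        have elems: "x \<in> carrier G" "y \<in> carrier G" "x0 \<in> carrier G" "y0 \<in> carrier G"
          using carr x y x0 y0 by auto
        then have "x = x0 \<otimes> y0 \<otimes> inv y" using xy z by (simp add: inv_solve_right)
        then have "inv x0 \<otimes> x = y0 \<otimes> inv y" using elems by (simp add: inv_solve_left' m_assoc)
        moreover have "inv x0 \<otimes> x \<in> U" "y0 \<otimes> inv y \<in> V"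
          using U V x y x0 y0 by (auto intro: subgroup.m_closed subgroup.m_inv_closed)
        ultimately show ?thesis by simp
      qed
      then show "(\<lambda>(x, y). inv x0 \<otimes> x) ` {a \<in> U \<times> V. ?m a = z} \<subseteq> U \<inter> V" by auto
    qed (use U in simp)
  qed (use U V in simp)
  then show ?thesis using image by (simp add: card_cartesian_product)
qed

lemma card_le_power_mult_card_Inter:
  assumes K: "subgroup K G" "finite K" and "finite S"
    and S: "\<And>U. U \<in> S \<Longrightarrow> subgroup U G \<and> U \<subseteq> K \<and> card K \<le> N * card U"
  shows "card K \<le> N ^ card S * card (K \<inter> \<Inter>S)"
  using \<open>finite S\<close> S
proof (induction S rule: finite_induct)
  case empty
  then show ?case by simp
next
  case (insert U S)
  let ?Z = "K \<inter> \<Inter>S"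
  have IH: "card K \<le> N ^ card S * card ?Z" using insert by blast
  have U: "subgroup U G" "U \<subseteq> K" "card K \<le> N * card U" using insert.prems by blast+
  have "subgroup (\<Inter>(insert K S)) G"
    by (rule subgroups_Inter) (use insert.prems K in blast)+
  then have Z: "subgroup ?Z G" by simp
  have fin: "finite U" "finite ?Z" using K(2) U(2) finite_subset by blast+
  have "U <#> ?Z \<subseteq> K <#> K" by (rule mono_set_mult) (use U(2) in auto)
  then have "U <#> ?Z \<subseteq> K" using subgroup_mult_id[OF K(1)] by simp
  then have "card (U <#> ?Z) \<le> card K" by (rule card_mono[OF K(2)])
  then have prod: "card U * card ?Z \<le> card K * card (U \<inter> ?Z)"
    using card_mult_card_le_card_set_mult_Int[OF U(1) fin(1) Z fin(2)] by (meson le_trans mult_le_mono1)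
  have "card K * card K \<le> (N * card U) * (N ^ card S * card ?Z)" by (rule mult_le_mono[OF U(3) IH])
  also have "\<dots> = N ^ Suc (card S) * (card U * card ?Z)" by (simp add: ac_simps)
  also have "\<dots> \<le> N ^ Suc (card S) * (card K * card (U \<inter> ?Z))" using prod by (rule mult_le_mono2)
  finally have "card K * card K \<le> card K * (N ^ Suc (card S) * card (U \<inter> ?Z))" by (simp add: ac_simps)
  moreover have "card K > 0" using K subgroup.one_closed card_gt_0_iff by blast
  ultimately have bound: "card K \<le> N ^ Suc (card S) * card (U \<inter> ?Z)" by simp
  have "K \<inter> \<Inter>(insert U S) = U \<inter> ?Z" using U(2) by blast
  moreover have "card (insert U S) = Suc (card S)" using insert.hyps by simp
  ultimately show ?case using bound by simp
qed

lemma normal_in_subgroup_conj_closed: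
  assumes "subgroup H G" "N \<lhd> G\<lparr>carrier := H\<rparr>" "h \<in> H" "n \<in> N"
  shows "inv h \<otimes> n \<otimes> h \<in> N"
  using normal.inv_op_closed1[OF assms(2), of h n] assms(3,4) m_inv_consistent[OF assms(1,3)] by simp

lemma normal_in_subgroup_imp_subgroup:
  assumes "subgroup H G" "N \<lhd> G\<lparr>carrier := H\<rparr>"
  shows "subgroup N G" "N \<subseteq> H"
  using incl_subgroup[OF assms(1) normal_imp_subgroup[OF assms(2)]]
    subgroup.subset[OF normal_imp_subgroup[OF assms(2)]] by auto

lemma mem_conj_coset_iff:
  assumes "h \<in> carrier G" "A \<subseteq> carrier G"
  shows "x \<in> h <# A #> inv h \<longleftrightarrow> x \<in> carrier G \<and> inv h \<otimes> x \<otimes> h \<in> A"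
proof
  assume "x \<in> h <# A #> inv h"
  then obtain a where a: "a \<in> A" "x = h \<otimes> a \<otimes> inv h" unfolding l_coset_def r_coset_def by blast
  moreover have "a \<in> carrier G" using a(1) assms(2) by blast
  ultimately have "x \<in> carrier G" "inv h \<otimes> x \<otimes> h = a"
    using assms(1) by (simp_all add: m_assoc)
  then show "x \<in> carrier G \<and> inv h \<otimes> x \<otimes> h \<in> A" using a(1) by simp
next
  assume x: "x \<in> carrier G \<and> inv h \<otimes> x \<otimes> h \<in> A"
  then have "x = h \<otimes> (inv h \<otimes> x \<otimes> h) \<otimes> inv h"
    using assms(1) by (simp add: m_assoc)
  then show "x \<in> h <# A #> inv h" using x unfolding l_coset_def r_coset_def by blast
qed

lemma card_conj_coset:
  assumes "h \<in> carrier G" "A \<subseteq> carrier G"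
  shows "card (h <# A #> inv h) = card A"
proof -
  have "h <# A #> inv h = (\<lambda>a. h \<otimes> a \<otimes> inv h) ` A" unfolding l_coset_def r_coset_def by auto
  moreover have "inj_on (\<lambda>a. h \<otimes> a \<otimes> inv h) A"
    using assms conjugation_is_inj by (auto intro: inj_onI simp: subset_iff)
  ultimately show ?thesis by (simp add: card_image)
qed

lemma conj_coset_subset_normal:
  assumes "subgroup H G" "K \<lhd> G\<lparr>carrier := H\<rparr>" "A \<subseteq> K" "h \<in> H"
  shows "h <# A #> inv h \<subseteq> K"
proof
  fix x assume "x \<in> h <# A #> inv h"
  then obtain a where a: "a \<in> A" "x = h \<otimes> a \<otimes> inv h" unfolding l_coset_def r_coset_def by blast
  have "inv h \<in> H" using assms(4) subgroup.m_inv_closed[OF assms(1)] by blast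
  then have "inv (inv h) \<otimes> a \<otimes> inv h \<in> K"
    using normal_in_subgroup_conj_closed[OF assms(1,2)] a(1) assms(3) by blast
  then show "x \<in> K" using a(2) subgroup.mem_carrier[OF assms(1,4)] by simp
qed

lemma conj_coset_eq_if_inv_mult_mem:
  assumes K: "subgroup K G" and A: "A \<lhd> G\<lparr>carrier := K\<rparr>"
    and h: "h \<in> carrier G" "h' \<in> carrier G" "inv h \<otimes> h' \<in> K"
  shows "h' <# A #> inv h' = h <# A #> inv h"
proof -
  have A_carr: "A \<subseteq> carrier G" using normal_in_subgroup_imp_subgroup[OF K A] subgroup.subset by blast
  have "g' <# A #> inv g' \<subseteq> g <# A #> inv g"
    if g: "g \<in> carrier G" "g' \<in> carrier G" "inv g \<otimes> g' \<in> K" for g g'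
  proof
    fix x assume "x \<in> g' <# A #> inv g'"
    then have x: "x \<in> carrier G" "inv g' \<otimes> x \<otimes> g' \<in> A" using mem_conj_coset_iff[OF g(2) A_carr] by auto
    have "inv (inv g \<otimes> g') \<in> K" using g(3) subgroup.m_inv_closed[OF K] by blast
    then have "inv (inv (inv g \<otimes> g')) \<otimes> (inv g' \<otimes> x \<otimes> g') \<otimes> inv (inv g \<otimes> g') \<in> A"
      using normal_in_subgroup_conj_closed[OF K A] x(2) by blast
    then have "inv g \<otimes> x \<otimes> g \<in> A" using x(1) g by (simp add: inv_mult_group m_assoc)
    then show "x \<in> g <# A #> inv g" using x(1) mem_conj_coset_iff[OF g(1) A_carr] by auto
  qed
  moreover have "inv h' \<otimes> h \<in> K"
    using subgroup.m_inv_closed[OF K h(3)] h(1,2) by (simp add: inv_mult_group)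
  ultimately show ?thesis using h by blast
qed

lemma mem_normal_core_iff:
  assumes "subgroup H G" "A \<subseteq> carrier G"
  shows "x \<in> normal_core G H A \<longleftrightarrow> x \<in> carrier G \<and> (\<forall>h\<in>H. inv h \<otimes> x \<otimes> h \<in> A)"
  using assms subgroup.one_closed[OF assms(1)]
  by (auto simp: normal_core_def mem_conj_coset_iff subgroup.mem_carrier)

lemma normal_core_subset:
  assumes "subgroup H G" "A \<subseteq> carrier G"
  shows "normal_core G H A \<subseteq> A"
proof
  fix x assume "x \<in> normal_core G H A"
  then have "x \<in> carrier G" "inv \<one> \<otimes> x \<otimes> \<one> \<in> A"
    using mem_normal_core_iff[OF assms] subgroup.one_closed[OF assms(1)] by auto
  then show "x \<in> A" by simp
qed

lemma normal_core_subgroup: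
  assumes "subgroup H G" "subgroup A G"
  shows "subgroup (normal_core G H A) G"
  unfolding normal_core_def
  using assms subgroup_conjugation_is_surj2 subgroup.mem_carrier[OF assms(1)] subgroup.one_closed[OF assms(1)]
  by (intro subgroups_Inter) auto

lemma normal_core_normal:
  assumes H: "subgroup H G" and A: "subgroup A G" "A \<subseteq> H"
  shows "normal_core G H A \<lhd> G\<lparr>carrier := H\<rparr>"
proof -
  let ?C = "normal_core G H A"
  have A_carrier: "A \<subseteq> carrier G" using A(1) subgroup.subset by blast
  have "subgroup ?C (G\<lparr>carrier := H\<rparr>)"
    using normal_core_subgroup[OF H A(1)] normal_core_subset[OF H A_carrier] A(2) H
    by (intro subgroup_incl) auto
  moreover have "g \<otimes> c \<otimes> inv g \<in> ?C" if g: "g \<in> H" and c: "c \<in> ?C" for g c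
  proof -
    have gc: "g \<in> carrier G" "c \<in> carrier G"
      using g c mem_normal_core_iff[OF H A_carrier] subgroup.mem_carrier[OF H] by auto
    have "inv h \<otimes> (g \<otimes> c \<otimes> inv g) \<otimes> h \<in> A" if h: "h \<in> H" for h
    proof -
      have "inv g \<otimes> h \<in> H" using g h subgroup.m_closed[OF H] subgroup.m_inv_closed[OF H] by blast
      then have "inv (inv g \<otimes> h) \<otimes> c \<otimes> (inv g \<otimes> h) \<in> A"
        using c mem_normal_core_iff[OF H A_carrier] by blast
      moreover have "h \<in> carrier G" using h subgroup.mem_carrier[OF H] by blast
      moreover have "inv (inv g \<otimes> h) = inv h \<otimes> g" using gc \<open>h \<in> carrier G\<close> by (simp add: inv_mult_group)
      ultimately show ?thesis using gc by (simp add: m_assoc)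
    qed
    then show ?thesis using gc mem_normal_core_iff[OF H A_carrier] by simp
  qed
  ultimately show ?thesis
    unfolding group.normal_inv_iff[OF subgroup_imp_group[OF H]] using m_inv_consistent[OF H] by simp
qed

lemma card_le_card_image_mult_card_subgroup:
  assumes H: "subgroup H G" "finite H" and K: "subgroup K G" "finite K"
    and q: "\<And>h h'. h \<in> H \<Longrightarrow> h' \<in> H \<Longrightarrow> q h = q h' \<Longrightarrow> inv h \<otimes> h' \<in> K"
  shows "card H \<le> card (q ` H) * card K"
proof (rule card_le_card_image_mult[OF H(2)])
  fix z assume "z \<in> q ` H"
  then obtain h0 where h0: "h0 \<in> H" "q h0 = z" by blast
  show "card {h \<in> H. q h = z} \<le> card K"
  proof (rule card_inj_on_le[OF _ _ K(2)])
    show "inj_on (\<lambda>h. inv h0 \<otimes> h) {h \<in> H. q h = z}"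
    proof (rule inj_onI, clarify)
      fix x y assume "x \<in> H" "y \<in> H" "inv h0 \<otimes> x = inv h0 \<otimes> y"
      then show "x = y" using h0(1) subgroup.mem_carrier[OF H(1)] by simp
    qed
    show "(\<lambda>h. inv h0 \<otimes> h) ` {h \<in> H. q h = z} \<subseteq> K"
      using q[OF h0(1)] h0(2) by blast
  qed
qed

lemma card_le_power_mult_card_normal_core:
  assumes H: "subgroup H G" "finite H"
    and K: "K \<lhd> G\<lparr>carrier := H\<rparr>"
    and A: "A \<lhd> G\<lparr>carrier := K\<rparr>" "card K \<le> N * card A"
    and q: "\<And>h h'. h \<in> H \<Longrightarrow> h' \<in> H \<Longrightarrow> q h = q h' \<Longrightarrow> inv h \<otimes> h' \<in> K"
  shows "card K \<le> N ^ card (q ` H) * card (normal_core G H A)"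
proof -
  have K_sub: "subgroup K G" "K \<subseteq> H" using normal_in_subgroup_imp_subgroup[OF H(1) K] by auto
  have A_sub: "subgroup A G" "A \<subseteq> K" using normal_in_subgroup_imp_subgroup[OF K_sub(1) A(1)] by auto
  have fin_K: "finite K" using H(2) K_sub(2) finite_subset by blast
  have carr: "h \<in> carrier G" if "h \<in> H" for h using that subgroup.mem_carrier[OF H(1)] by blast
  have A_carr: "A \<subseteq> carrier G" using A_sub(1) subgroup.subset by blast
  let ?conj = "\<lambda>h. h <# A #> inv h"
  have "card K \<le> N ^ card (?conj ` H) * card (K \<inter> \<Inter>(?conj ` H))"
  proof (rule card_le_power_mult_card_Inter[OF K_sub(1) fin_K])
    show "finite (?conj ` H)" using H(2) by blast
    fix U assume "U \<in> ?conj ` H"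
    then obtain h where h: "h \<in> H" and U: "U = ?conj h" by blast
    show "subgroup U G \<and> U \<subseteq> K \<and> card K \<le> N * card U"
      unfolding U using subgroup_conjugation_is_surj2[OF carr[OF h] A_sub(1)]
        conj_coset_subset_normal[OF H(1) K A_sub(2) h] card_conj_coset[OF carr[OF h] A_carr] A(2)
      by simp
  qed
  moreover have "K \<inter> \<Inter>(?conj ` H) = normal_core G H A"
    using normal_core_subset[OF H(1) A_carr] A_sub(2) by (auto simp: normal_core_def)
  ultimately have "card K \<le> N ^ card (?conj ` H) * card (normal_core G H A)" by simp
  also have "\<dots> \<le> N ^ card (q ` H) * card (normal_core G H A)"
  proof (intro mult_le_mono1 power_increasing)
    have "?conj h = ?conj h'" if "h \<in> H" "h' \<in> H" "q h = q h'" for h h'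
      by (rule conj_coset_eq_if_inv_mult_mem[OF K_sub(1) A(1) carr carr q, symmetric]) (use that in auto)
    then show "card (?conj ` H) \<le> card (q ` H)" by (rule card_image_le_card_image[OF H(2)])
    have "card K > 0" using fin_K subgroup.one_closed[OF K_sub(1)] card_gt_0_iff by blast
    then show "1 \<le> N" using A(2) by (cases N) auto
  qed
  finally show ?thesis .
qed

lemma lower_central_subset_carrier:
  assumes "A \<subseteq> carrier G"
  shows "lower_central G A k \<subseteq> carrier G"
proof (induction k)
  case 0
  then show ?case using assms by simp
next
  case (Suc k)
  then have "{x \<otimes> y \<otimes> inv x \<otimes> inv y | x y. x \<in> lower_central G A k \<and> y \<in> A} \<subseteq> carrier G"
    using assms by blast
  then show ?case by (simp add: generate_incl)
qed

lemma lower_central_mono: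
  assumes "C \<subseteq> A"
  shows "lower_central G C k \<subseteq> lower_central G A k"
proof (induction k)
  case 0
  then show ?case using assms by simp
next
  case (Suc k)
  then have "{x \<otimes> y \<otimes> inv x \<otimes> inv y | x y. x \<in> lower_central G C k \<and> y \<in> C}
      \<subseteq> {x \<otimes> y \<otimes> inv x \<otimes> inv y | x y. x \<in> lower_central G A k \<and> y \<in> A}"
    using assms by blast
  then show ?case by (simp add: mono_generate)
qed

lemma nilpotent_class_le_subgroup:
  assumes "subgroup C G" "C \<subseteq> A" "nilpotent_class_le G c A"
  shows "nilpotent_class_le G c C"
  using lower_central_mono[OF assms(2), of c] one_mem_lower_central[OF assms(1), of c] assms(3)
  unfolding nilpotent_class_le_def by blast

end

context group_hom
begin

lemma subgroup_vimage:
  assumes "subgroup K H"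
  shows "subgroup (carrier G \<inter> h -` K) G"
proof (rule G.subgroupI)
  show "carrier G \<inter> h -` K \<subseteq> carrier G" by blast
  show "carrier G \<inter> h -` K \<noteq> {}" using subgroup.one_closed[OF assms] by force
next
  fix a assume "a \<in> carrier G \<inter> h -` K"
  then show "inv a \<in> carrier G \<inter> h -` K" using subgroup.m_inv_closed[OF assms] by simp
next
  fix a b assume "a \<in> carrier G \<inter> h -` K" "b \<in> carrier G \<inter> h -` K"
  then show "a \<otimes> b \<in> carrier G \<inter> h -` K" using subgroup.m_closed[OF assms] by simp
qed

lemma inv_mult_mem_kernel:
  assumes "x \<in> carrier G" "y \<in> carrier G" "h x = h y"
  shows "inv x \<otimes> y \<in> kernel G H h"
  using assms unfolding kernel_def by simp

lemma image_commutator_set: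
  assumes "A \<subseteq> carrier G" "B \<subseteq> carrier G"
  shows "h ` {x \<otimes> y \<otimes> inv x \<otimes> inv y | x y. x \<in> A \<and> y \<in> B}
    = {x \<otimes>\<^bsub>H\<^esub> y \<otimes>\<^bsub>H\<^esub> inv\<^bsub>H\<^esub> x \<otimes>\<^bsub>H\<^esub> inv\<^bsub>H\<^esub> y | x y. x \<in> h ` A \<and> y \<in> h ` B}"
    (is "h ` ?S = ?T")
proof
  have comm: "h (x \<otimes> y \<otimes> inv x \<otimes> inv y)
      = h x \<otimes>\<^bsub>H\<^esub> h y \<otimes>\<^bsub>H\<^esub> inv\<^bsub>H\<^esub> h x \<otimes>\<^bsub>H\<^esub> inv\<^bsub>H\<^esub> h y"
    if "x \<in> A" "y \<in> B" for x y
  proof -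
    have "x \<in> carrier G" "y \<in> carrier G" using that assms by auto
    then show ?thesis by simp
  qed
  show "h ` ?S \<subseteq> ?T"
  proof
    fix z assume "z \<in> h ` ?S"
    then obtain x y where xy: "x \<in> A" "y \<in> B" and "z = h (x \<otimes> y \<otimes> inv x \<otimes> inv y)" by blast
    then have "z = h x \<otimes>\<^bsub>H\<^esub> h y \<otimes>\<^bsub>H\<^esub> inv\<^bsub>H\<^esub> h x \<otimes>\<^bsub>H\<^esub> inv\<^bsub>H\<^esub> h y" using comm by simp
    then show "z \<in> ?T" using xy by blast
  qed
  show "?T \<subseteq> h ` ?S"
  proof
    fix z assume "z \<in> ?T"
    then obtain x y where xy: "x \<in> A" "y \<in> B"
      and "z = h x \<otimes>\<^bsub>H\<^esub> h y \<otimes>\<^bsub>H\<^esub> inv\<^bsub>H\<^esub> h x \<otimes>\<^bsub>H\<^esub> inv\<^bsub>H\<^esub> h y" by blast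
    then have "z = h (x \<otimes> y \<otimes> inv x \<otimes> inv y)" using comm by simp
    then show "z \<in> h ` ?S" using xy by blast
  qed
qed

lemma lower_central_image:
  assumes "A \<subseteq> carrier G"
  shows "h ` lower_central G A k = lower_central H (h ` A) k"
proof (induction k)
  case 0
  then show ?case by simp
next
  case (Suc k)
  have L: "lower_central G A k \<subseteq> carrier G" by (rule G.lower_central_subset_carrier[OF assms])
  then have S: "{x \<otimes> y \<otimes> inv x \<otimes> inv y | x y. x \<in> lower_central G A k \<and> y \<in> A} \<subseteq> carrier G"
    using assms by blast
  show ?case using generate_img[OF S] image_commutator_set[OF L assms] Suc by simp
qed

lemma nilpotent_class_le_image:
  assumes "A \<subseteq> carrier G" "nilpotent_class_le G c A"
  shows "nilpotent_class_le H c (h ` A)"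
  using assms lower_central_image[OF assms(1), of c] unfolding nilpotent_class_le_def by simp

end

locale left_exact_sequence =
  emb: group_hom G1 G i + proj: group_hom G G2 f
  for G1 :: "('a, 'm) monoid_scheme" and G :: "('b, 'n) monoid_scheme"
    and G2 :: "('c, 'o) monoid_scheme" and i :: "'a \<Rightarrow> 'b" and f :: "'b \<Rightarrow> 'c" +
  assumes inj_emb: "inj_on i (carrier G1)"
    and image_emb: "i ` carrier G1 = kernel G G2 f"
begin

lemma image_preimage:
  "i ` (carrier G1 \<inter> i -` H) = H \<inter> kernel G G2 f"
  unfolding image_emb[symmetric] by blast

lemma card_preimage:
  "card (carrier G1 \<inter> i -` H) = card (H \<inter> kernel G G2 f)"
proof -
  have "card (i ` (carrier G1 \<inter> i -` H)) = card (carrier G1 \<inter> i -` H)"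
    by (rule card_image[OF inj_on_subset[OF inj_emb Int_lower1]])
  then show ?thesis by (simp add: image_preimage)
qed

lemma finite_subgroup_preimage:
  assumes "finite_subgroup G H"
  shows "finite_subgroup G1 (carrier G1 \<inter> i -` H)"
proof -
  have H: "subgroup H G" "finite H" using assms unfolding finite_subgroup_def by auto
  have "finite (i ` (carrier G1 \<inter> i -` H))" using H(2) image_preimage by simp
  then have "finite (carrier G1 \<inter> i -` H)"
    using finite_imageD inj_on_subset[OF inj_emb Int_lower1] by blast
  then show ?thesis using emb.subgroup_vimage[OF H(1)] unfolding finite_subgroup_def by blast
qed

lemma card_preimage_dvd:
  assumes "finite_subgroup G H"
  shows "card (carrier G1 \<inter> i -` H) dvd card H"
proof -
  have "subgroup H G" using assms unfolding finite_subgroup_def by blast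
  then show ?thesis
    using emb.H.card_subgroup_dvd emb.H.subgroups_Inter_pair proj.subgroup_kernel card_preimage
    by (metis Int_lower1)
qed

lemma image_normal_subgroup_preimage:
  assumes H: "subgroup H G" and A1: "A1 \<lhd> G1\<lparr>carrier := carrier G1 \<inter> i -` H\<rparr>"
  shows "i ` A1 \<lhd> G\<lparr>carrier := H \<inter> kernel G G2 f\<rparr>"
proof -
  let ?K1 = "carrier G1 \<inter> i -` H" and ?K = "H \<inter> kernel G G2 f"
  have K1: "subgroup ?K1 G1" by (rule emb.subgroup_vimage[OF H])
  have "i \<in> hom (G1\<lparr>carrier := ?K1\<rparr>) (G\<lparr>carrier := ?K\<rparr>)"
    using image_preimage by (auto simp: hom_def)
  then have "group_hom (G1\<lparr>carrier := ?K1\<rparr>) (G\<lparr>carrier := ?K\<rparr>) i"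
    using emb.G.subgroup_imp_group[OF K1]
      emb.H.subgroup_imp_group[OF emb.H.subgroups_Inter_pair[OF H proj.subgroup_kernel]]
    by (simp add: group_hom_def group_hom_axioms_def)
  moreover have "i ` carrier (G1\<lparr>carrier := ?K1\<rparr>) = carrier (G\<lparr>carrier := ?K\<rparr>)"
    by (simp add: image_preimage)
  ultimately show ?thesis by (rule normal.surj_hom_normal_subgroup[OF A1])
qed

lemma exists_normal_subgroup_image:
  assumes B: "\<And>H'. finite_subgroup G2 H' \<Longrightarrow> card H' \<le> B"
    and H: "finite_subgroup G H"
    and A1: "A1 \<lhd> G1\<lparr>carrier := carrier G1 \<inter> i -` H\<rparr>"
      "card (carrier G1 \<inter> i -` H) \<le> N * card A1"
  obtains C where "C \<lhd> G\<lparr>carrier := H\<rparr>" "subgroup C G" "C \<subseteq> i ` A1"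
    "card C dvd card A1" "card H \<le> B * N ^ B * card C"
proof -
  let ?K = "H \<inter> kernel G G2 f" and ?A = "i ` A1"
  have H_sub: "subgroup H G" "finite H" using H unfolding finite_subgroup_def by auto
  have K_normal: "?K \<lhd> G\<lparr>carrier := H\<rparr>"
    using emb.H.normal_Int_subgroup[OF H_sub(1) proj.normal_kernel] by (simp add: Int_commute)
  have K_sub: "subgroup ?K G" "finite ?K"
    using emb.H.subgroups_Inter_pair[OF H_sub(1) proj.subgroup_kernel] H_sub(2) by auto
  have A_normal: "?A \<lhd> G\<lparr>carrier := ?K\<rparr>" by (rule image_normal_subgroup_preimage[OF H_sub(1) A1(1)])
  have A_sub: "subgroup ?A G" "?A \<subseteq> ?K"
    using emb.H.normal_in_subgroup_imp_subgroup[OF K_sub(1) A_normal] by auto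
  have inj_A1: "inj_on i A1"
    using inj_on_subset[OF inj_emb] subgroup.subset[OF normal_imp_subgroup[OF A1(1)]] by simp
  have A_index: "card ?K \<le> N * card ?A" using A1(2) card_preimage card_image[OF inj_A1] by simp
  have fibres: "inv\<^bsub>G\<^esub> h \<otimes>\<^bsub>G\<^esub> h' \<in> ?K" if "h \<in> H" "h' \<in> H" "f h = f h'" for h h'
    using proj.inv_mult_mem_kernel[OF _ _ that(3)] that(1,2) subgroup.mem_carrier[OF H_sub(1)]
      subgroup.m_closed[OF H_sub(1)] subgroup.m_inv_closed[OF H_sub(1)] by blast
  have card_fH: "card (f ` H) \<le> B"
    using B proj.subgroup_img_is_subgroup[OF H_sub(1)] H_sub(2) unfolding finite_subgroup_def by simp
  have "card ?K > 0" using K_sub subgroup.one_closed[OF K_sub(1)] card_gt_0_iff by blast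
  then have N_pos: "1 \<le> N" using A_index by (cases N) auto
  let ?C = "normal_core G H ?A"
  have C_sub: "subgroup ?C G" "?C \<subseteq> ?A"
    by (rule emb.H.normal_core_subgroup[OF H_sub(1) A_sub(1)],
        rule emb.H.normal_core_subset[OF H_sub(1) subgroup.subset[OF A_sub(1)]])
  have "card H \<le> card (f ` H) * card ?K"
    by (rule emb.H.card_le_card_image_mult_card_subgroup[where q = f, OF H_sub K_sub fibres])
  also have "\<dots> \<le> card (f ` H) * (N ^ card (f ` H) * card ?C)"
    using emb.H.card_le_power_mult_card_normal_core[where q = f, OF H_sub K_normal A_normal A_index fibres]
    by (rule mult_le_mono2)
  also have "\<dots> \<le> B * (N ^ B * card ?C)"
    by (rule mult_le_mono[OF card_fH mult_le_mono1[OF power_increasing[OF card_fH N_pos]]])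
  finally have bound: "card H \<le> B * N ^ B * card ?C" by (simp only: mult.assoc)
  have "card ?C dvd card ?A" by (rule emb.H.card_subgroup_dvd[OF A_sub(1) C_sub])
  then have dvd: "card ?C dvd card A1" by (simp only: card_image[OF inj_A1])
  have "?A \<subseteq> H" using A_sub(2) by blast
  then have "?C \<lhd> G\<lparr>carrier := H\<rparr>" by (rule emb.H.normal_core_normal[OF H_sub(1) A_sub(1)])
  then show ?thesis using that C_sub dvd bound by blast
qed

end

locale property_transfer = left_exact_sequence +
  fixes P1 and P
  assumes property_image: "subgroup A1 G1 \<Longrightarrow> P1 A1 \<Longrightarrow> P (i ` A1)"
    and property_subgroup: "subgroup C G \<Longrightarrow> C \<subseteq> A \<Longrightarrow> P A \<Longrightarrow> P C"
begin

lemma exists_normal_subgroup_with_property: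
  assumes B: "\<And>H'. finite_subgroup G2 H' \<Longrightarrow> card H' \<le> B"
    and H: "finite_subgroup G H"
    and A1: "A1 \<lhd> G1\<lparr>carrier := carrier G1 \<inter> i -` H\<rparr>"
      "card (carrier G1 \<inter> i -` H) \<le> N * card A1" "P1 A1"
  obtains C where "C \<lhd> G\<lparr>carrier := H\<rparr>" "card C dvd card A1" "card H \<le> B * N ^ B * card C" "P C"
proof -
  obtain C where C: "C \<lhd> G\<lparr>carrier := H\<rparr>" "subgroup C G" "C \<subseteq> i ` A1"
    "card C dvd card A1" "card H \<le> B * N ^ B * card C"
    using exists_normal_subgroup_image[OF B H A1(1,2)] by blast
  have "subgroup (carrier G1 \<inter> i -` H) G1"
    using finite_subgroup_preimage[OF H] unfolding finite_subgroup_def by blast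
  then have "subgroup A1 G1" using emb.G.incl_subgroup normal_imp_subgroup[OF A1(1)] by blast
  then have "P C" using property_subgroup[OF C(2,3) property_image[OF _ A1(3)]] by blast
  then show ?thesis using that C by blast
qed

lemma jordan_wrt_transfer:
  assumes "bounded_finite_subgroups G2" and "jordan_wrt G1 P1"
  shows "jordan_wrt G P"
proof -
  obtain B where B: "\<And>H'. finite_subgroup G2 H' \<Longrightarrow> card H' \<le> B"
    using assms(1) unfolding bounded_finite_subgroups_def by blast
  obtain J where J: "\<And>K. finite_subgroup G1 K \<Longrightarrow>
      \<exists>A. A \<lhd> G1\<lparr>carrier := K\<rparr> \<and> card K \<le> J * card A \<and> P1 A"
    using assms(2) unfolding jordan_wrt_def by blast
  have "\<exists>C. C \<lhd> G\<lparr>carrier := H\<rparr> \<and> card H \<le> B * J ^ B * card C \<and> P C"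
    if H: "finite_subgroup G H" for H
  proof -
    obtain A1 where "A1 \<lhd> G1\<lparr>carrier := carrier G1 \<inter> i -` H\<rparr>"
      "card (carrier G1 \<inter> i -` H) \<le> J * card A1" "P1 A1"
      using J[OF finite_subgroup_preimage[OF H]] by blast
    from exists_normal_subgroup_with_property[OF B H this] show ?thesis by metis
  qed
  then show ?thesis unfolding jordan_wrt_def by blast
qed

lemma gen_p_jordan_wrt_transfer:
  assumes "bounded_finite_subgroups G2" and "gen_p_jordan_wrt G1 p P1"
  shows "gen_p_jordan_wrt G p P"
proof -
  obtain B where B: "\<And>H'. finite_subgroup G2 H' \<Longrightarrow> card H' \<le> B"
    using assms(1) unfolding bounded_finite_subgroups_def by blast
  obtain J where J: "\<And>K. finite_subgroup G1 K \<Longrightarrow> \<not> p dvd card K \<Longrightarrow>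
      \<exists>A. A \<lhd> G1\<lparr>carrier := K\<rparr> \<and> card K \<le> J * card A \<and> P1 A"
    using assms(2) unfolding gen_p_jordan_wrt_def by blast
  have "\<exists>C. C \<lhd> G\<lparr>carrier := H\<rparr> \<and> card H \<le> B * J ^ B * card C \<and> P C"
    if H: "finite_subgroup G H" and p: "\<not> p dvd card H" for H
  proof -
    have "\<not> p dvd card (carrier G1 \<inter> i -` H)"
      using p card_preimage_dvd[OF H] dvd_trans by blast
    then obtain A1 where "A1 \<lhd> G1\<lparr>carrier := carrier G1 \<inter> i -` H\<rparr>"
      "card (carrier G1 \<inter> i -` H) \<le> J * card A1" "P1 A1"
      using J[OF finite_subgroup_preimage[OF H]] by blast
    from exists_normal_subgroup_with_property[OF B H this] show ?thesis by metis
  qed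
  then show ?thesis unfolding gen_p_jordan_wrt_def by blast
qed

lemma p_jordan_wrt_transfer:
  assumes "p > 0" and "bounded_finite_subgroups G2" and "p_jordan_wrt G1 p P1"
  shows "p_jordan_wrt G p P"
proof -
  obtain B where B: "\<And>H'. finite_subgroup G2 H' \<Longrightarrow> card H' \<le> B"
    using assms(2) unfolding bounded_finite_subgroups_def by blast
  obtain J e where J: "\<And>K. finite_subgroup G1 K \<Longrightarrow> \<exists>A. A \<lhd> G1\<lparr>carrier := K\<rparr> \<and> coprime (card A) p \<and>
      card K \<le> J * (p ^ multiplicity p (card K)) ^ e * card A \<and> P1 A"
    using assms(3) unfolding p_jordan_wrt_def by blast
  have "\<exists>C. C \<lhd> G\<lparr>carrier := H\<rparr> \<and> coprime (card C) p \<and>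
      card H \<le> B * J ^ B * (p ^ multiplicity p (card H)) ^ (e * B) * card C \<and> P C"
    if H: "finite_subgroup G H" for H
  proof -
    let ?K1 = "carrier G1 \<inter> i -` H"
    define N where "N = J * (p ^ multiplicity p (card H)) ^ e"
    obtain A1 where A1: "A1 \<lhd> G1\<lparr>carrier := ?K1\<rparr>" "coprime (card A1) p"
      "card ?K1 \<le> J * (p ^ multiplicity p (card ?K1)) ^ e * card A1" "P1 A1"
      using J[OF finite_subgroup_preimage[OF H]] by blast
    have "card H \<noteq> 0" using H subgroup.one_closed card_gt_0_iff unfolding finite_subgroup_def by fastforce
    then have "multiplicity p (card ?K1) \<le> multiplicity p (card H)"
      using dvd_imp_multiplicity_le card_preimage_dvd[OF H] by blast
    then have "J * (p ^ multiplicity p (card ?K1)) ^ e \<le> N"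
      unfolding N_def using assms(1) by (simp add: power_increasing power_mono)
    then have "card ?K1 \<le> N * card A1" using A1(3) by (meson le_trans mult_le_mono1)
    then obtain C where C: "C \<lhd> G\<lparr>carrier := H\<rparr>" "card C dvd card A1" "card H \<le> B * N ^ B * card C" "P C"
      using exists_normal_subgroup_with_property[OF B H A1(1) _ A1(4)] by blast
    have "coprime (card C) p" using C(2) A1(2) coprime_imp_coprime dvd_trans by blast
    moreover have "B * N ^ B = B * J ^ B * (p ^ multiplicity p (card H)) ^ (e * B)"
      unfolding N_def by (simp add: power_mult_distrib power_mult)
    ultimately show ?thesis using C by metis
  qed
  then show ?thesis unfolding p_jordan_wrt_def by blast
qed

end

context left_exact_sequence
begin

lemma property_transfer_abelian:
  "property_transfer G1 G G2 i f (abelian_set G1) (abelian_set G)"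
proof unfold_locales
  show "abelian_set G (i ` A1)" if "subgroup A1 G1" "abelian_set G1 A1" for A1
    using abelian_set_hom_image[OF emb.homh subgroup.subset] that by blast
  show "abelian_set G C" if "C \<subseteq> A" "abelian_set G A" for C A
    using that unfolding abelian_set_def by blast
qed

lemma property_transfer_nilpotent:
  "property_transfer G1 G G2 i f (nilpotent_class_le G1 c) (nilpotent_class_le G c)"
proof unfold_locales
  show "nilpotent_class_le G c (i ` A1)" if "subgroup A1 G1" "nilpotent_class_le G1 c A1" for A1
    using emb.nilpotent_class_le_image[OF subgroup.subset] that by blast
  show "nilpotent_class_le G c C" if "subgroup C G" "C \<subseteq> A" "nilpotent_class_le G c A" for C A
    using emb.H.nilpotent_class_le_subgroup that by blast
qed

end

theorem lemma2p8:
  fixes G1 :: "('a, 'm) monoid_scheme" and G :: "('b, 'n) monoid_scheme"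
    and G2 :: "('c, 'o) monoid_scheme"
    and i :: "'a \<Rightarrow> 'b" and f :: "'b \<Rightarrow> 'c" and p c :: nat
  assumes "Factorial_Ring.prime p"
    and "group G1" and "group G" and "group G2"
    and "i \<in> hom G1 G" and "inj_on i (carrier G1)"
    and "f \<in> hom G G2" and "i ` carrier G1 = kernel G G2 f"
    and "bounded_finite_subgroups G2"
  shows "(Jordan G1 \<longrightarrow> Jordan G)
    \<and> (p_Jordan G1 p \<longrightarrow> p_Jordan G p)
    \<and> (gen_p_Jordan G1 p \<longrightarrow> gen_p_Jordan G p)
    \<and> (nil_Jordan G1 c \<longrightarrow> nil_Jordan G c)
    \<and> (nil_p_Jordan G1 p c \<longrightarrow> nil_p_Jordan G p c)
    \<and> (gen_nil_p_Jordan G1 p c \<longrightarrow> gen_nil_p_Jordan G p c)"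
proof -
  have "left_exact_sequence G1 G G2 i f"
    using assms(2-8) by (simp add: left_exact_sequence_def left_exact_sequence_axioms_def
        group_hom_def group_hom_axioms_def)
  then have abelian: "property_transfer G1 G G2 i f (abelian_set G1) (abelian_set G)"
    and nilpotent: "property_transfer G1 G G2 i f (nilpotent_class_le G1 c) (nilpotent_class_le G c)"
    by (rule left_exact_sequence.property_transfer_abelian,
        rule left_exact_sequence.property_transfer_nilpotent)
  have "p > 0" using assms(1) prime_gt_0_nat by blast
  then show ?thesis
    using assms(9) abelian nilpotent property_transfer.jordan_wrt_transfer
      property_transfer.p_jordan_wrt_transfer property_transfer.gen_p_jordan_wrt_transfer
    unfolding Jordan_def p_Jordan_def gen_p_Jordan_def nil_Jordan_def nil_p_Jordan_def
      gen_nil_p_Jordan_def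
    by meson
qed

end
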